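(* Let $q$ be a prime power and let $n, t, m$ be positive integers with $t \geq m$. Choose a sequence $S=(g_1,\dots,g_t)$ of $t$ vectors of $\mathbb{F}_q^n$ uniformly at random (each $g_i$ independently and uniformly in $\mathbb{F}_q^n$). Then $$\mathbb{P}[e_m(S)=0]\leq \left(\frac{m}{q}\right)^{n}.$$
   Context: $\mathbb{F}_q^n$ is viewed as a commutative ring with coordinatewise addition and multiplication. For elements $g_1,\dots,g_t$ of a commutative ring, $e_m(g_1,\dots,g_t)=\sum_{1\leq i_1<\cdots<i_m\leq t}\prod_{j=1}^m g_{i_j}$ is the $m$-th elementary symmetric polynomial evaluated at them. *)

theory Defs
  imports "HOL-Analysis.Analysis"
begin

definition esym :: "nat \<Rightarrow> nat \<Rightarrow> (nat \<Rightarrow> 'b::comm_ring_1) \<Rightarrow> 'b" where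
  "esym m t g = (\<Sum>I \<in> {I. I \<subseteq> {0..<t} \<and> card I = m}. \<Prod>i\<in>I. g i)"

end

theory Submission
  imports Defs
begin

(* Expanding along the last entry, e_(k+1)(g_1, ..., g_(t+1)) = g_(t+1) e_k(g_1, ..., g_t) +
   e_(k+1)(g_1, ..., g_t). For scalars in an integral domain and g_1, ..., g_t fixed, this is an
   affine function of g_(t+1), with at most one root unless the slope e_k(g_1, ..., g_t) vanishes.
   Induction on t therefore bounds the proportion of zeros of e_m among scalar sequences with
   entries from a finite set A by m / |A|. Since F_q^n is a product ring, e_m(S) = 0 iff e_m vanishes
   on each of the n coordinate sequences of S, which range independently over F_q^t; this gives
   the n-th power. *)

lemma subsets_insert_card_Suc:
  assumes "finite A" "x \<notin> A"
  shows "{I. I \<subseteq> insert x A \<and> card I = Suc k}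
       = {I. I \<subseteq> A \<and> card I = Suc k} \<union> insert x ` {I. I \<subseteq> A \<and> card I = k}"
proof (intro set_eqI iffI)
  fix I assume I: "I \<in> {I. I \<subseteq> insert x A \<and> card I = Suc k}"
  then have "finite I"
    using assms(1) finite_subset by blast
  with I show "I \<in> {I. I \<subseteq> A \<and> card I = Suc k} \<union> insert x ` {I. I \<subseteq> A \<and> card I = k}"
    by (cases "x \<in> I") (auto simp: image_iff intro!: exI[of _ "I - {x}"])
next
  fix I assume "I \<in> {I. I \<subseteq> A \<and> card I = Suc k} \<union> insert x ` {I. I \<subseteq> A \<and> card I = k}"
  with assms show "I \<in> {I. I \<subseteq> insert x A \<and> card I = Suc k}"
    by (auto simp: card_insert_if finite_subset)
qed

lemma card_PiE_insert_Collect: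
  assumes "finite S" "x \<notin> S" "\<And>i. finite (T i)"
  shows "card {g \<in> PiE (insert x S) T. P g} = (\<Sum>f\<in>PiE S T. card {a \<in> T x. P (f(x := a))})"
proof -
  let ?h = "\<lambda>(f, a). f(x := a)"
  let ?Sig = "SIGMA f:PiE S T. {a \<in> T x. P (f(x := a))}"
  have "inj_on ?h ?Sig"
  proof (rule inj_onI, clarify)
    fix f a f' a' assume f: "f \<in> PiE S T" "f' \<in> PiE S T" and upd: "f(x := a) = f'(x := a')"
    have "f = (f(x := a))(x := undefined)" "f' = (f'(x := a'))(x := undefined)"
      using PiE_arb[OF f(1) \<open>x \<notin> S\<close>] PiE_arb[OF f(2) \<open>x \<notin> S\<close>] by auto
    with upd show "f = f' \<and> a = a'"
      by (metis fun_upd_same)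
  qed
  moreover have "{g \<in> PiE (insert x S) T. P g} = ?h ` ?Sig"
  proof (intro equalityI subsetI)
    fix g assume "g \<in> {g \<in> PiE (insert x S) T. P g}"
    then have "(g(x := undefined), g x) \<in> ?Sig"
      using assms(2) by (auto simp: fun_upd_in_PiE PiE_mem)
    then show "g \<in> ?h ` ?Sig"
      by (rule rev_image_eqI) simp
  qed (clarsimp simp: PiE_fun_upd)
  ultimately have "card {g \<in> PiE (insert x S) T. P g} = card ?Sig"
    by (simp add: card_image)
  also have "\<dots> = (\<Sum>f\<in>PiE S T. card {a \<in> T x. P (f(x := a))})"
    using assms by (intro card_SigmaI finite_PiE) auto
  finally show ?thesis .
qed

lemma card_affine_roots_le:
  fixes c d :: "'a::idom"
  assumes "finite A"
  shows "card {a \<in> A. a * c + d = 0} \<le> (if c = 0 then card A else 1)"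
proof (cases "c = 0")
  case True
  with assms show ?thesis
    by (simp add: card_mono)
next
  case False
  then have "a = b" if "a * c + d = 0" "b * c + d = 0" for a b
    using that by (metis add_right_cancel mult_right_cancel)
  with False assms show ?thesis
    by (simp add: card_le_Suc0_iff_eq)
qed

lemma prod_component [simp]:
  fixes f :: "'a \<Rightarrow> ('b::comm_monoid_mult) ^ 'n"
  shows "(prod f A) $ i = (\<Prod>x\<in>A. f x $ i)"
  by (induction A rule: infinite_finite_induct) simp_all

lemma bij_betw_transpose_PiE:
  "bij_betw (\<lambda>S k. \<lambda>i\<in>I. S i $ k) (PiE I (\<lambda>_. UNIV :: ('a ^ 'n) set))
     (PiE UNIV (\<lambda>_. PiE I (\<lambda>_. UNIV :: 'a set)))"
  by (rule bij_betwI[where g = "\<lambda>F. \<lambda>i\<in>I. \<chi> k. F k i"])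
    (auto simp: vec_eq_iff fun_eq_iff PiE_iff extensional_def)

lemma esym_cong:
  assumes "\<And>i. i < t \<Longrightarrow> g i = h i"
  shows "esym m t g = esym m t h"
  unfolding esym_def using assms by (intro sum.cong prod.cong) auto

lemma esym_0 [simp]: "esym 0 t g = 1"
proof -
  have "{I. I \<subseteq> {0..<t} \<and> card I = 0} = {{}}"
    by (auto dest: finite_subset)
  then show ?thesis
    by (simp add: esym_def)
qed

lemma esym_fun_upd [simp]: "t \<le> i \<Longrightarrow> esym m t (g(i := a)) = esym m t g"
  by (rule esym_cong) simp

lemma esym_restrict [simp]: "esym m t (restrict g {0..<t}) = esym m t g"
  by (rule esym_cong) simp

lemma esym_Suc: "esym (Suc m) (Suc t) g = g t * esym m t g + esym (Suc m) t g"
proof -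
  let ?P = "\<lambda>k. {I. I \<subseteq> {0..<t} \<and> card I = k}"
  have inj: "inj_on (insert t) (?P m)"
    by (rule inj_onI) (metis atLeastLessThan_iff insert_ident less_irrefl mem_Collect_eq subsetD)
  have "esym (Suc m) (Suc t) g = (\<Sum>I\<in>?P (Suc m). prod g I) + (\<Sum>I\<in>insert t ` ?P m. prod g I)"
    unfolding esym_def atLeast0_lessThan_Suc subsets_insert_card_Suc[of "{0..<t}" t, simplified]
    by (rule sum.union_disjoint) auto
  also have "(\<Sum>I\<in>insert t ` ?P m. prod g I) = (\<Sum>I\<in>?P m. g t * prod g I)"
  proof -
    have "prod g (insert t I) = g t * prod g I" if "I \<subseteq> {0..<t}" for I
      using that finite_subset[OF that] by (subst prod.insert) auto
    with inj show ?thesis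
      by (simp add: sum.reindex)
  qed
  finally show ?thesis
    by (simp add: esym_def sum_distrib_left)
qed

lemma esym_component: "esym m t S $ k = esym m t (\<lambda>i. S i $ k)"
  by (simp add: esym_def)

definition esym_zeros :: "nat \<Rightarrow> nat \<Rightarrow> 'a::comm_ring_1 set \<Rightarrow> (nat \<Rightarrow> 'a) set" where
  "esym_zeros m t A = {g \<in> PiE {0..<t} (\<lambda>_. A). esym m t g = 0}"

lemma card_esym_zeros_le:
  fixes A :: "'a::idom set"
  assumes "finite A" "m \<le> t"
  shows "card (esym_zeros m t A) * card A \<le> m * card A ^ t"
  using assms(2)
proof (induction t arbitrary: m)
  case 0
  then show ?case by (simp add: esym_zeros_def)
next
  case (Suc t)
  show ?case
  proof (cases "m = 0")
    case True
    then show ?thesis by (simp add: esym_zeros_def)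
  next
    case False
    then obtain k where m: "m = Suc k"
      using not0_implies_Suc by blast
    let ?P = "PiE {0..<t} (\<lambda>_. A)"
    have "card (esym_zeros (Suc k) (Suc t) A)
        = (\<Sum>f\<in>?P. card {a \<in> A. a * esym k t f + esym (Suc k) t f = 0})"
      using card_PiE_insert_Collect[of "{0..<t}" t "\<lambda>_. A"] assms(1)
      by (simp add: esym_zeros_def atLeast0_lessThan_Suc esym_Suc)
    also have "\<dots> \<le> (\<Sum>f\<in>?P. 1 + (if esym k t f = 0 then card A else 0))"
      by (intro sum_mono order_trans[OF card_affine_roots_le[OF assms(1)]]) auto
    also have "\<dots> = card A ^ t + card (esym_zeros k t A) * card A"
      using assms(1) sum.inter_filter[of ?P "\<lambda>_. card A" "\<lambda>f. esym k t f = 0"]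
      by (simp only: sum.distrib) (simp add: esym_zeros_def card_PiE finite_PiE)
    also have "\<dots> \<le> card A ^ t + k * card A ^ t"
      using Suc m by simp
    finally have "card (esym_zeros (Suc k) (Suc t) A) \<le> Suc k * card A ^ t"
      by simp
    then show ?thesis
      unfolding m power_Suc2 mult.assoc[symmetric] by (rule mult_le_mono1)
  qed
qed

lemma card_esym_zeros_vec:
  "card (esym_zeros m t (UNIV :: ('a::comm_ring_1 ^ 'n) set))
     = card (esym_zeros m t (UNIV :: 'a set)) ^ CARD('n)"
proof -
  have "bij_betw (\<lambda>S k. \<lambda>i\<in>{0..<t}. S i $ k) (esym_zeros m t (UNIV :: ('a ^ 'n) set))
      {F \<in> PiE UNIV (\<lambda>_. PiE {0..<t} (\<lambda>_. UNIV)). \<forall>k. esym m t (F k) = 0}"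
    unfolding esym_zeros_def
    by (intro bij_betw_Collect[OF bij_betw_transpose_PiE]) (simp add: vec_eq_iff esym_component)
  also have "{F \<in> PiE UNIV (\<lambda>_. PiE {0..<t} (\<lambda>_. UNIV)). \<forall>k. esym m t (F k) = 0}
      = PiE UNIV (\<lambda>_. esym_zeros m t UNIV)"
    by (auto simp: esym_zeros_def)
  finally show ?thesis
    by (simp add: bij_betw_same_card card_PiE)
qed

theorem proposition2p2:
  fixes m t :: nat
  assumes "1 \<le> m" and "m \<le> t"
  shows "real (card {S \<in> PiE {0..<t} (\<lambda>_. (UNIV :: ('a::{finite,field} ^ 'n) set)).
                       esym m t S = 0})
         / real (card (PiE {0..<t} (\<lambda>_. (UNIV :: ('a ^ 'n) set))))
       \<le> (real m / real CARD('a)) ^ CARD('n)"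
proof -
  let ?q = "CARD('a)"
  have "card (esym_zeros m t (UNIV :: 'a set)) * ?q \<le> m * ?q ^ t"
    using card_esym_zeros_le[OF finite_class.finite_UNIV assms(2)] by simp
  then have scalar: "real (card (esym_zeros m t (UNIV :: 'a set))) / real ?q ^ t \<le> real m / real ?q"
    by (simp add: field_simps flip: of_nat_mult of_nat_power)
  have "card (PiE {0..<t} (\<lambda>_. UNIV :: ('a ^ 'n) set)) = (?q ^ t) ^ CARD('n)"
    by (simp add: card_PiE flip: power_mult) (simp add: mult.commute)
  then have "real (card (esym_zeros m t (UNIV :: ('a ^ 'n) set)))
      / real (card (PiE {0..<t} (\<lambda>_. UNIV :: ('a ^ 'n) set)))
      = (real (card (esym_zeros m t (UNIV :: 'a set))) / real ?q ^ t) ^ CARD('n)"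
    by (simp add: card_esym_zeros_vec power_divide)
  also have "\<dots> \<le> (real m / real ?q) ^ CARD('n)"
    using scalar by (rule power_mono) simp
  finally show ?thesis
    by (simp add: esym_zeros_def)
qed

end
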